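(* Let $\langle S, \preceq\rangle$ be a partially ordered set and let $\mathcal{G}$ be a group acting on $S$. For $a \in S$ write $[a] = \{Ta : T \in \mathcal{G}\}$ and let $S/\mathcal{G}$ be the set of these equivalence classes. Define the strong induced relation on $S/\mathcal{G}$ by: $A \preceq_{\mathcal{G},s} B$ iff for all $a \in A$ there exists $b \in B$ with $a \preceq b$; and the weak induced relation by: $A \preceq_{\mathcal{G},w} B$ iff there exist $a \in A$ and $b \in B$ with $a \preceq b$. Then: (1) the strong relation $\preceq_{\mathcal{G},s}$ is a preorder on $S/\mathcal{G}$; (2) if $\mathcal{G}$ is increasing on $S$ (i.e. for all $T \in \mathcal{G}$ and $a,b \in S$, $a \preceq b$ implies $Ta \preceq Tb$), then the strong and weak relations coincide; (3) if $\mathcal{G}$ acts transversely on $S$ (i.e. for all $T \in \mathcal{G}$ and $a \in S$, $Ta \preceq a$ implies $Ta = a$), then the strong relation $\preceq_{\mathcal{G},s}$ is a partial order on $S/\mathcal{G}$. *)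

theory Defs
  imports "HOL-Algebra.Group_Action"
begin

definition strong_rel :: "('g, 'c) monoid_scheme \<Rightarrow> 'a set \<Rightarrow> ('g \<Rightarrow> 'a \<Rightarrow> 'a) \<Rightarrow> 'a rel \<Rightarrow> 'a set rel" where
  "strong_rel G S \<phi> r = {(A, B). A \<in> orbits G S \<phi> \<and> B \<in> orbits G S \<phi> \<and> (\<forall>a\<in>A. \<exists>b\<in>B. (a, b) \<in> r)}"

definition weak_rel :: "('g, 'c) monoid_scheme \<Rightarrow> 'a set \<Rightarrow> ('g \<Rightarrow> 'a \<Rightarrow> 'a) \<Rightarrow> 'a rel \<Rightarrow> 'a set rel" where
  "weak_rel G S \<phi> r = {(A, B). A \<in> orbits G S \<phi> \<and> B \<in> orbits G S \<phi> \<and> (\<exists>a\<in>A. \<exists>b\<in>B. (a, b) \<in> r)}"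

definition increasing_action :: "('g, 'c) monoid_scheme \<Rightarrow> 'a set \<Rightarrow> ('g \<Rightarrow> 'a \<Rightarrow> 'a) \<Rightarrow> 'a rel \<Rightarrow> bool" where
  "increasing_action G S \<phi> r \<longleftrightarrow>
     (\<forall>T\<in>carrier G. \<forall>a\<in>S. \<forall>b\<in>S. (a, b) \<in> r \<longrightarrow> (\<phi> T a, \<phi> T b) \<in> r)"

definition transverse_action :: "('g, 'c) monoid_scheme \<Rightarrow> 'a set \<Rightarrow> ('g \<Rightarrow> 'a \<Rightarrow> 'a) \<Rightarrow> 'a rel \<Rightarrow> bool" where
  "transverse_action G S \<phi> r \<longleftrightarrow>
     (\<forall>T\<in>carrier G. \<forall>a\<in>S. (\<phi> T a, a) \<in> r \<longrightarrow> \<phi> T a = a)"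

end

theory Submission
  imports Defs
begin

text \<open>Orbits partition S, and any two points of an orbit are related by some T \<in> G.
  Hence the strong relation inherits reflexivity and transitivity from the order.
  If G is increasing, a single comparison a \<preceq> b between orbits is transported along
  the action to every point of the first orbit, so weak implies strong.
  If G acts transversely, two comparable points a \<preceq> Ta of one orbit coincide, since
  T\<inverse>(Ta) = a \<preceq> Ta forces T\<inverse>(Ta) = Ta; so A \<preceq> B \<preceq> A yields a \<preceq> b \<preceq> a,
  whence a = b and A = B.\<close>

context group_action
begin

lemma orbits_subset: "A \<in> orbits G E \<phi> \<Longrightarrow> A \<subseteq> E"
  using orbits_coverture by blast

lemma orbits_nonempty: "A \<in> orbits G E \<phi> \<Longrightarrow> A \<noteq> {}"
  unfolding orbits_def using orbit_refl by blast

lemma orbit_in_orbits: "a \<in> E \<Longrightarrow> orbit G \<phi> a \<in> orbits G E \<phi>"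
  unfolding orbits_def by blast

lemma orbits_eq_orbit:
  assumes "A \<in> orbits G E \<phi>" and "a \<in> A"
  shows "A = orbit G \<phi> a"
proof -
  have "a \<in> E" using assms orbits_subset by blast
  then have "a \<in> A \<inter> orbit G \<phi> a" using assms(2) orbit_refl by blast
  then show ?thesis using disjoint_union[OF assms(1) orbit_in_orbits[OF \<open>a \<in> E\<close>]] by blast
qed

lemma orbits_eqI:
  "A \<in> orbits G E \<phi> \<Longrightarrow> B \<in> orbits G E \<phi> \<Longrightarrow> a \<in> A \<Longrightarrow> a \<in> B \<Longrightarrow> A = B"
  using orbits_eq_orbit by metis

lemma orbits_closed:
  "A \<in> orbits G E \<phi> \<Longrightarrow> a \<in> A \<Longrightarrow> g \<in> carrier G \<Longrightarrow> \<phi> g a \<in> A"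
  using orbits_eq_orbit unfolding orbit_def by blast

lemma orbits_connect:
  "A \<in> orbits G E \<phi> \<Longrightarrow> a \<in> A \<Longrightarrow> a' \<in> A \<Longrightarrow> \<exists>g\<in>carrier G. a' = \<phi> g a"
  using orbits_eq_orbit unfolding orbit_def by blast

lemma strong_rel_preorder_on:
  assumes "preorder_on E r"
  shows "preorder_on (orbits G E \<phi>) (strong_rel G E \<phi> r)"
proof -
  have "refl_on E r" and "trans r" using assms by (auto simp: preorder_on_def)
  then show ?thesis
    unfolding preorder_on_def refl_on_def trans_def strong_rel_def
    using orbits_subset by blast
qed

lemma strong_rel_subset_weak_rel: "strong_rel G E \<phi> r \<subseteq> weak_rel G E \<phi> r"
  unfolding strong_rel_def weak_rel_def using orbits_nonempty by blast

lemma weak_rel_subset_strong_rel: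
  assumes inc: "increasing_action G E \<phi> r"
  shows "weak_rel G E \<phi> r \<subseteq> strong_rel G E \<phi> r"
proof
  fix p assume "p \<in> weak_rel G E \<phi> r"
  then obtain A B a b where p: "p = (A, B)" and A: "A \<in> orbits G E \<phi>" and B: "B \<in> orbits G E \<phi>"
    and "a \<in> A" "b \<in> B" "(a, b) \<in> r"
    unfolding weak_rel_def by blast
  have "\<exists>b'\<in>B. (a', b') \<in> r" if "a' \<in> A" for a'
  proof -
    obtain g where g: "g \<in> carrier G" "a' = \<phi> g a"
      using orbits_connect[OF A \<open>a \<in> A\<close> \<open>a' \<in> A\<close>] by blast
    have "(\<phi> g a, \<phi> g b) \<in> r"
      using inc g(1) \<open>(a, b) \<in> r\<close> \<open>a \<in> A\<close> \<open>b \<in> B\<close> A B orbits_subset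
      unfolding increasing_action_def by blast
    then show ?thesis using orbits_closed[OF B \<open>b \<in> B\<close> g(1)] g(2) by blast
  qed
  then show "p \<in> strong_rel G E \<phi> r" unfolding strong_rel_def using p A B by blast
qed

lemma transverse_orbit_related_eq:
  assumes trv: "transverse_action G E \<phi> r" and A: "A \<in> orbits G E \<phi>"
    and "a \<in> A" "a' \<in> A" "(a, a') \<in> r"
  shows "a = a'"
proof -
  have "a \<in> E" "a' \<in> E" using assms(3,4) A orbits_subset by blast+
  obtain g where g: "g \<in> carrier G" "a' = \<phi> g a"
    using orbits_connect[OF A \<open>a \<in> A\<close> \<open>a' \<in> A\<close>] by blast
  have inv_g: "inv\<^bsub>G\<^esub> g \<in> carrier G"
    using g(1) group.inv_closed[OF group_hom.axioms(1)[OF group_hom]] by blast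
  have inv_moves_back: "\<phi> (inv\<^bsub>G\<^esub> g) a' = a"
    using orbit_sym_aux[OF g(1) \<open>a \<in> E\<close>] g(2) by simp
  have "\<phi> (inv\<^bsub>G\<^esub> g) a' = a'"
    using trv inv_g \<open>a' \<in> E\<close> \<open>(a, a') \<in> r\<close> inv_moves_back
    unfolding transverse_action_def by metis
  then show ?thesis using inv_moves_back by simp
qed

lemma strong_rel_antisym:
  assumes "transverse_action G E \<phi> r" and "trans r" and "antisym r"
  shows "antisym (strong_rel G E \<phi> r)"
proof (rule antisymI)
  fix A B assume "(A, B) \<in> strong_rel G E \<phi> r" "(B, A) \<in> strong_rel G E \<phi> r"
  then have A: "A \<in> orbits G E \<phi>" and B: "B \<in> orbits G E \<phi>"
    and AB: "\<forall>a\<in>A. \<exists>b\<in>B. (a, b) \<in> r" and BA: "\<forall>b\<in>B. \<exists>a\<in>A. (b, a) \<in> r"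
    unfolding strong_rel_def by auto
  obtain a where "a \<in> A" using orbits_nonempty[OF A] by blast
  then obtain b a' where "b \<in> B" "(a, b) \<in> r" "a' \<in> A" "(b, a') \<in> r" using AB BA by blast
  then have "a = a'" using transverse_orbit_related_eq[OF assms(1) A \<open>a \<in> A\<close>] \<open>trans r\<close>
    by (meson transD)
  then have "a = b" using \<open>antisym r\<close> \<open>(a, b) \<in> r\<close> \<open>(b, a') \<in> r\<close> by (meson antisymD)
  then show "A = B" using orbits_eqI[OF A B \<open>a \<in> A\<close>] \<open>b \<in> B\<close> by blast
qed

end

theorem theorem1:
  fixes G :: "('g, 'c) monoid_scheme" and S :: "'a set" and \<phi> :: "'g \<Rightarrow> 'a \<Rightarrow> 'a" and r :: "'a rel"
  assumes po: "partial_order_on S r"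
    and act: "group_action G S \<phi>"
  shows "preorder_on (orbits G S \<phi>) (strong_rel G S \<phi> r)
         \<and> (increasing_action G S \<phi> r \<longrightarrow> strong_rel G S \<phi> r = weak_rel G S \<phi> r)
         \<and> (transverse_action G S \<phi> r \<longrightarrow> partial_order_on (orbits G S \<phi>) (strong_rel G S \<phi> r))"
proof -
  interpret group_action G S \<phi> by (rule act)
  have "preorder_on S r" "trans r" "antisym r"
    using po by (auto simp: partial_order_on_def preorder_on_def)
  have pre: "preorder_on (orbits G S \<phi>) (strong_rel G S \<phi> r)"
    using strong_rel_preorder_on \<open>preorder_on S r\<close> .
  moreover have "strong_rel G S \<phi> r = weak_rel G S \<phi> r" if "increasing_action G S \<phi> r"
    using strong_rel_subset_weak_rel weak_rel_subset_strong_rel[OF that] by blast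
  moreover have "partial_order_on (orbits G S \<phi>) (strong_rel G S \<phi> r)"
    if "transverse_action G S \<phi> r"
    unfolding partial_order_on_def
    using pre strong_rel_antisym[OF that \<open>trans r\<close> \<open>antisym r\<close>] by blast
  ultimately show ?thesis by blast
qed

end
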